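(* Let $X$ be a finite $T_0$ topological space and $\mathcal V$ a multivector field on $X$ with $X$ invariant. Let $S_1,S_2\subset X$ be isolated invariant sets. There exists a link $\gamma$ from $S_1$ to $S_2$ if and only if there exists a path $\rho:[a,b]\cap\mathbb Z\to X$ with $\rho(a)\in S_1$ and $\rho(b)\in S_2$.
   Context: Notation: $\operatorname{cl}$ is closure; $A\subset X$ is locally closed if $\operatorname{cl}A\setminus A$ is closed. A multivector field $\mathcal V$ on $X$ is a partition of $X$ into locally closed sets (multivectors); $[x]_{\mathcal V}$ is the multivector containing $x$. A multivector $V$ is critical if $H(\operatorname{cl}V,\operatorname{cl}V\setminus V)$ (relative singular homology) is nontrivial, regular otherwise. $A$ is $\mathcal V$-compatible if it is a union of multivectors; $\langle A\rangle_{\mathcal V}$ is the smallest locally closed $\mathcal V$-compatible set containing $A$. $\Pi_{\mathcal V}(x)=\operatorname{cl}\{x\}\cup[x]_{\mathcal V}$. A solution is a partial map $\gamma:\mathbb Z\nrightarrow X$ with domain an integer interval and $\gamma(t+1)\in\Pi_{\mathcal V}(\gamma(t))$ whenever $t,t+1\in\operatorname{dom}\gamma$; a path is a solution with finite domain; a full solution has domain $\mathbb Z$. $\alpha(\gamma)=\langle\bigcap_{t\le0}\gamma((-\infty,t])\rangle_{\mathcal V}$, $\omega(\gamma)=\langle\bigcap_{t\ge0}\gamma([t,\infty))\rangle_{\mathcal V}$. A full solution is essential unless $\alpha(\gamma)$ or $\omega(\gamma)$ lies in a single regular multivector. $\operatorname{Inv}S$ is the set of $x\in S$ with an essential solution $\gamma$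 with image in $S$ and $\gamma(0)=x$; $S$ is invariant if $\operatorname{Inv}S=S$. An invariant $S$ is isolated invariant if there is a closed $N\supset\Pi_{\mathcal V}(S)$ such that every path in $N$ with endpoints in $S$ has image in $S$. A link from $S_1$ to $S_2$ is a full solution $\gamma$ with $\alpha(\gamma)\cap S_1\ne\emptyset\ne\omega(\gamma)\cap S_2$. *)

theory Defs
  imports "HOL-Analysis.Analysis" "HOL-Homology.Homology"
begin

definition locally_closed :: "'a topology \<Rightarrow> 'a set \<Rightarrow> bool" where
  "locally_closed X A \<longleftrightarrow> A \<subseteq> topspace X \<and> closedin X (X closure_of A - A)"

definition multivector_field :: "'a topology \<Rightarrow> 'a set set \<Rightarrow> bool" where
  "multivector_field X V \<longleftrightarrow>
     \<Union>V = topspace X \<and> {} \<notin> V \<and> (\<forall>A\<in>V. \<forall>B\<in>V. A \<noteq> B \<longrightarrow> A \<inter> B = {}) \<and>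
     (\<forall>A\<in>V. locally_closed X A)"

definition mv_of :: "'a set set \<Rightarrow> 'a \<Rightarrow> 'a set" where
  "mv_of V x = (THE A. A \<in> V \<and> x \<in> A)"

definition critical :: "'a topology \<Rightarrow> 'a set \<Rightarrow> bool" where
  "critical X A \<longleftrightarrow>
     (\<exists>p. \<not> trivial_group
        (relative_homology_group p (subtopology X (X closure_of A)) (X closure_of A - A)))"

definition regular :: "'a topology \<Rightarrow> 'a set \<Rightarrow> bool" where
  "regular X A \<longleftrightarrow> \<not> critical X A"

definition compatible :: "'a set set \<Rightarrow> 'a set \<Rightarrow> bool" where
  "compatible V A \<longleftrightarrow> (\<exists>W\<subseteq>V. A = \<Union>W)"

text \<open>Smallest locally closed V-compatible set containing A (exists in finite T0 spaces).\<close>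
definition lc_hull :: "'a topology \<Rightarrow> 'a set set \<Rightarrow> 'a set \<Rightarrow> 'a set" where
  "lc_hull X V A = \<Inter>{B. locally_closed X B \<and> compatible V B \<and> A \<subseteq> B}"

definition Pi_mv :: "'a topology \<Rightarrow> 'a set set \<Rightarrow> 'a \<Rightarrow> 'a set" where
  "Pi_mv X V x = X closure_of {x} \<union> mv_of V x"

definition int_interval :: "int set \<Rightarrow> bool" where
  "int_interval I \<longleftrightarrow> (\<forall>a\<in>I. \<forall>c\<in>I. \<forall>b. a \<le> b \<and> b \<le> c \<longrightarrow> b \<in> I)"

text \<open>A solution with domain I (a partial map Z -> X, represented by a total
  function whose values outside I are irrelevant).\<close>
definition solution :: "'a topology \<Rightarrow> 'a set set \<Rightarrow> int set \<Rightarrow> (int \<Rightarrow> 'a) \<Rightarrow> bool" where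
  "solution X V I g \<longleftrightarrow> int_interval I \<and> (\<forall>t\<in>I. g t \<in> topspace X) \<and>
     (\<forall>t. t \<in> I \<and> t + 1 \<in> I \<longrightarrow> g (t + 1) \<in> Pi_mv X V (g t))"

definition mv_path :: "'a topology \<Rightarrow> 'a set set \<Rightarrow> int \<Rightarrow> int \<Rightarrow> (int \<Rightarrow> 'a) \<Rightarrow> bool" where
  "mv_path X V a b g \<longleftrightarrow> a \<le> b \<and> solution X V {a..b} g"

definition full_solution :: "'a topology \<Rightarrow> 'a set set \<Rightarrow> (int \<Rightarrow> 'a) \<Rightarrow> bool" where
  "full_solution X V g \<longleftrightarrow> solution X V UNIV g"

definition alpha_lim :: "'a topology \<Rightarrow> 'a set set \<Rightarrow> (int \<Rightarrow> 'a) \<Rightarrow> 'a set" where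
  "alpha_lim X V g = lc_hull X V (\<Inter>t\<in>{..0}. g ` {..t})"

definition omega_lim :: "'a topology \<Rightarrow> 'a set set \<Rightarrow> (int \<Rightarrow> 'a) \<Rightarrow> 'a set" where
  "omega_lim X V g = lc_hull X V (\<Inter>t\<in>{0..}. g ` {t..})"

definition essential :: "'a topology \<Rightarrow> 'a set set \<Rightarrow> (int \<Rightarrow> 'a) \<Rightarrow> bool" where
  "essential X V g \<longleftrightarrow> full_solution X V g \<and>
     \<not> (\<exists>A\<in>V. regular X A \<and> alpha_lim X V g \<subseteq> A) \<and>
     \<not> (\<exists>A\<in>V. regular X A \<and> omega_lim X V g \<subseteq> A)"

definition Inv :: "'a topology \<Rightarrow> 'a set set \<Rightarrow> 'a set \<Rightarrow> 'a set" where
  "Inv X V S = {x\<in>S. \<exists>g. essential X V g \<and> range g \<subseteq> S \<and> g 0 = x}"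

definition invariant :: "'a topology \<Rightarrow> 'a set set \<Rightarrow> 'a set \<Rightarrow> bool" where
  "invariant X V S \<longleftrightarrow> Inv X V S = S"

definition isolated_invariant :: "'a topology \<Rightarrow> 'a set set \<Rightarrow> 'a set \<Rightarrow> bool" where
  "isolated_invariant X V S \<longleftrightarrow> S \<subseteq> topspace X \<and> invariant X V S \<and>
     (\<exists>N. closedin X N \<and> (\<Union>x\<in>S. Pi_mv X V x) \<subseteq> N \<and>
        (\<forall>a b g. mv_path X V a b g \<and> g ` {a..b} \<subseteq> N \<and> g a \<in> S \<and> g b \<in> S
                 \<longrightarrow> g ` {a..b} \<subseteq> S))"

definition is_link :: "'a topology \<Rightarrow> 'a set set \<Rightarrow> 'a set \<Rightarrow> 'a set \<Rightarrow> (int \<Rightarrow> 'a) \<Rightarrow> bool" where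
  "is_link X V S1 S2 g \<longleftrightarrow> full_solution X V g \<and>
     alpha_lim X V g \<inter> S1 \<noteq> {} \<and> omega_lim X V g \<inter> S2 \<noteq> {}"

end

theory Submission
  imports Defs
begin

text \<open>Write \<open>x \<rightarrow> y\<close> for \<open>y \<in> \<Pi>(x)\<close>. In a finite space, the hull \<open>\<langle>A\<rangle>\<close> lies inside the set of
  points lying on a \<open>\<rightarrow>\<close>-chain from \<open>A\<close> back to \<open>A\<close>: that set is \<open>\<V>\<close>-compatible, because
  points of one multivector reach each other in one step, and locally closed, because it is
  convex for the specialization order. The limit sets of a full solution are the hulls of
  the values it takes arbitrarily early, resp. late. Hence a link from \<open>S1\<close> to \<open>S2\<close> gives a
  chain from a point of \<open>S1\<close> to an early value, along the link to a later value, and on to a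
  point of \<open>S2\<close>. Conversely, a path from \<open>S1\<close> to \<open>S2\<close> is prolonged backwards inside \<open>S1\<close>
  and forwards inside \<open>S2\<close> by full solutions, which exist by invariance; by finiteness
  these tails repeat some value infinitely often, and it lies in the respective limit set.\<close>

lemma multivector_field_Union: "multivector_field X V \<Longrightarrow> \<Union>V = topspace X"
  unfolding multivector_field_def by simp

lemma multivector_field_eqI:
  "\<lbrakk>multivector_field X V; A \<in> V; B \<in> V; x \<in> A; x \<in> B\<rbrakk> \<Longrightarrow> A = B"
  unfolding multivector_field_def by blast

lemma mv_of_mem:
  assumes "multivector_field X V" "x \<in> topspace X"
  shows "mv_of V x \<in> V" "x \<in> mv_of V x"
proof -
  obtain A where "A \<in> V" "x \<in> A"
    using assms(2) multivector_field_Union[OF assms(1)] by blast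
  then have "\<exists>!A. A \<in> V \<and> x \<in> A"
    using multivector_field_eqI[OF assms(1)] by blast
  then have "mv_of V x \<in> V \<and> x \<in> mv_of V x"
    unfolding mv_of_def by (rule theI')
  then show "mv_of V x \<in> V" "x \<in> mv_of V x" by simp_all
qed

lemma mv_of_subset_topspace:
  assumes "multivector_field X V" "x \<in> topspace X"
  shows "mv_of V x \<subseteq> topspace X"
  using mv_of_mem(1)[OF assms] multivector_field_Union[OF assms(1)] by blast

lemma mv_of_eq:
  assumes "multivector_field X V" "x \<in> topspace X" "y \<in> mv_of V x"
  shows "mv_of V y = mv_of V x"
proof -
  have "y \<in> topspace X"
    using assms(3) mv_of_subset_topspace[OF assms(1,2)] by blast
  then show ?thesis
    using multivector_field_eqI[OF assms(1) _ mv_of_mem(1)[OF assms(1,2)] _ assms(3)]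
      mv_of_mem[OF assms(1)] by blast
qed

definition mv_step :: "'a topology \<Rightarrow> 'a set set \<Rightarrow> 'a \<Rightarrow> 'a \<Rightarrow> bool" where
  "mv_step X V x y \<longleftrightarrow> x \<in> topspace X \<and> y \<in> topspace X \<and> y \<in> Pi_mv X V x"

lemma full_solution_mv_step_rtranclp:
  assumes "full_solution X V g" "s \<le> t"
  shows "(mv_step X V)\<^sup>*\<^sup>* (g s) (g t)"
  using assms(2)
proof (induction t rule: int_ge_induct)
  case base
  show ?case by simp
next
  case (step t)
  have "mv_step X V (g t) (g (t + 1))"
    using assms(1) unfolding full_solution_def solution_def mv_step_def by blast
  with step.IH show ?case by simp
qed

lemma mv_path_if_mv_step_rtranclp:
  assumes "(mv_step X V)\<^sup>*\<^sup>* x y" "x \<in> topspace X"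
  shows "\<exists>n \<rho>. mv_path X V 0 n \<rho> \<and> \<rho> 0 = x \<and> \<rho> n = y"
  using assms(1)
proof (induction rule: rtranclp_induct)
  case base
  have "mv_path X V 0 0 (\<lambda>_. x)"
    using assms(2) by (simp add: mv_path_def solution_def int_interval_def)
  then show ?case by blast
next
  case (step y z)
  then obtain n \<rho> where \<rho>: "mv_path X V 0 n \<rho>" "\<rho> 0 = x" "\<rho> n = y"
    by blast
  have "mv_path X V 0 (n + 1) (\<rho>(n + 1 := z))"
    using \<rho> step.hyps(2)
    unfolding mv_path_def solution_def int_interval_def mv_step_def by auto
  moreover have "(\<rho>(n + 1 := z)) 0 = x"
    using \<rho> by (simp add: mv_path_def)
  ultimately show ?case by fastforce
qed

lemma closure_of_finite_eq_UN:
  "finite C \<Longrightarrow> X closure_of C = (\<Union>c\<in>C. X closure_of {c})"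
  using closure_of_Union[of "(\<lambda>c. {c}) ` C" X] by simp

text \<open>Finiteness is used only to write closures as unions of closures of points.\<close>
lemma locally_closed_if_specialization_convex:
  assumes fin: "finite (topspace X)" and "R \<subseteq> topspace X"
    and convex: "\<And>r v u. \<lbrakk>r \<in> R; u \<in> R; v \<in> X closure_of {r}; u \<in> X closure_of {v}\<rbrakk> \<Longrightarrow> v \<in> R"
  shows "locally_closed X R"
proof -
  have "X closure_of (X closure_of R - R) \<subseteq> X closure_of R - R"
  proof
    fix u assume u: "u \<in> X closure_of (X closure_of R - R)"
    have "finite R" "finite (X closure_of R - R)"
      using fin \<open>R \<subseteq> topspace X\<close> closure_of_subset_topspace
      by (metis finite_subset, metis finite_Diff finite_subset)
    then obtain v r where v: "v \<in> X closure_of R - R" "u \<in> X closure_of {v}"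
      and r: "r \<in> R" "v \<in> X closure_of {r}"
      using u closure_of_finite_eq_UN by (metis (no_types, lifting) DiffD1 UN_E)
    have "u \<in> X closure_of R"
      using u closure_of_mono[of "X closure_of R - R" "X closure_of R" X] by auto
    moreover have "u \<notin> R"
      using convex[OF r(1) _ r(2) v(2)] v(1) by blast
    ultimately show "u \<in> X closure_of R - R" by blast
  qed
  then have "closedin X (X closure_of R - R)"
    using closure_of_subset_eq[of "X closure_of R - R" X] closure_of_subset_topspace[of X R]
    by blast
  with assms(2) show ?thesis
    unfolding locally_closed_def by simp
qed

lemma compatible_if_closed_under_mv_of:
  assumes "multivector_field X V" "R \<subseteq> topspace X" "\<And>z w. z \<in> R \<Longrightarrow> w \<in> mv_of V z \<Longrightarrow> w \<in> R"
  shows "compatible V R"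
  unfolding compatible_def
proof (intro exI conjI)
  show "mv_of V ` R \<subseteq> V"
    using assms(2) mv_of_mem(1)[OF assms(1)] by blast
  show "R = \<Union> (mv_of V ` R)"
    using assms(2,3) mv_of_mem(2)[OF assms(1)] by blast
qed

definition connecting_set :: "'a topology \<Rightarrow> 'a set set \<Rightarrow> 'a set \<Rightarrow> 'a set" where
  "connecting_set X V A =
     {z \<in> topspace X. (\<exists>a\<in>A. (mv_step X V)\<^sup>*\<^sup>* a z) \<and> (\<exists>b\<in>A. (mv_step X V)\<^sup>*\<^sup>* z b)}"

lemma connecting_set_convex:
  assumes "r \<in> connecting_set X V A" "u \<in> connecting_set X V A" "v \<in> topspace X"
    and "(mv_step X V)\<^sup>*\<^sup>* r v" "(mv_step X V)\<^sup>*\<^sup>* v u"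
  shows "v \<in> connecting_set X V A"
proof -
  obtain a b where "a \<in> A" "(mv_step X V)\<^sup>*\<^sup>* a r" "b \<in> A" "(mv_step X V)\<^sup>*\<^sup>* u b"
    using assms(1,2) unfolding connecting_set_def by blast
  then have "(mv_step X V)\<^sup>*\<^sup>* a v" "(mv_step X V)\<^sup>*\<^sup>* v b"
    using assms(4,5) rtranclp_trans by metis+
  with \<open>a \<in> A\<close> \<open>b \<in> A\<close> assms(3) show ?thesis
    unfolding connecting_set_def by blast
qed

lemma connecting_set_subset_topspace: "connecting_set X V A \<subseteq> topspace X"
  unfolding connecting_set_def by blast

lemma locally_closed_connecting_set:
  assumes "finite (topspace X)"
  shows "locally_closed X (connecting_set X V A)"
proof (rule locally_closed_if_specialization_convex[OF assms connecting_set_subset_topspace])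
  fix r v u
  assume r: "r \<in> connecting_set X V A" and u: "u \<in> connecting_set X V A"
    and v: "v \<in> X closure_of {r}" and uv: "u \<in> X closure_of {v}"
  have "r \<in> topspace X" "v \<in> topspace X" "u \<in> topspace X"
    using r u v connecting_set_subset_topspace[of X V A] closure_of_subset_topspace[of X "{r}"]
    by blast+
  then have "mv_step X V r v" "mv_step X V v u"
    using v uv unfolding mv_step_def Pi_mv_def by blast+
  then show "v \<in> connecting_set X V A"
    using connecting_set_convex[OF r u \<open>v \<in> topspace X\<close>] by blast
qed

lemma compatible_connecting_set:
  assumes mv: "multivector_field X V"
  shows "compatible V (connecting_set X V A)"
proof (rule compatible_if_closed_under_mv_of[OF mv connecting_set_subset_topspace])
  fix z w assume z: "z \<in> connecting_set X V A" and w: "w \<in> mv_of V z"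
  have "z \<in> topspace X"
    using z connecting_set_subset_topspace[of X V A] by blast
  have "w \<in> topspace X"
    using w mv_of_subset_topspace[OF mv \<open>z \<in> topspace X\<close>] by blast
  have "z \<in> mv_of V w"
    using mv_of_eq[OF mv \<open>z \<in> topspace X\<close> w] mv_of_mem(2)[OF mv \<open>z \<in> topspace X\<close>] by simp
  with \<open>z \<in> topspace X\<close> \<open>w \<in> topspace X\<close> w
  have "mv_step X V z w" "mv_step X V w z"
    unfolding mv_step_def Pi_mv_def by blast+
  then show "w \<in> connecting_set X V A"
    using connecting_set_convex[OF z z \<open>w \<in> topspace X\<close>] by blast
qed

lemma lc_hull_subset_connecting_set:
  assumes "finite (topspace X)" "multivector_field X V" "A \<subseteq> topspace X"
  shows "lc_hull X V A \<subseteq> connecting_set X V A"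
proof -
  have "A \<subseteq> connecting_set X V A"
    using assms(3) unfolding connecting_set_def by blast
  then show ?thesis
    using locally_closed_connecting_set[OF assms(1)] compatible_connecting_set[OF assms(2)]
    unfolding lc_hull_def by blast
qed

definition recurrent_past :: "(int \<Rightarrow> 'a) \<Rightarrow> 'a set" where
  "recurrent_past g = {x. \<forall>t. \<exists>s\<le>t. g s = x}"

definition recurrent_future :: "(int \<Rightarrow> 'a) \<Rightarrow> 'a set" where
  "recurrent_future g = {x. \<forall>t. \<exists>s\<ge>t. g s = x}"

lemma alpha_lim_eq: "alpha_lim X V g = lc_hull X V (recurrent_past g)"
proof -
  have "(\<Inter>t\<in>{..0}. g ` {..t}) = recurrent_past g"
  proof (intro equalityI subsetI)
    fix x assume x: "x \<in> (\<Inter>t\<in>{..0}. g ` {..t})"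
    have "\<exists>s\<le>t. g s = x" for t
      using x[THEN INT_D, of "min t 0"] by force
    then show "x \<in> recurrent_past g"
      unfolding recurrent_past_def by blast
  qed (auto simp: recurrent_past_def)
  then show ?thesis
    unfolding alpha_lim_def by simp
qed

lemma omega_lim_eq: "omega_lim X V g = lc_hull X V (recurrent_future g)"
proof -
  have "(\<Inter>t\<in>{0..}. g ` {t..}) = recurrent_future g"
  proof (intro equalityI subsetI)
    fix x assume x: "x \<in> (\<Inter>t\<in>{0..}. g ` {t..})"
    have "\<exists>s\<ge>t. g s = x" for t
      using x[THEN INT_D, of "max t 0"] by force
    then show "x \<in> recurrent_future g"
      unfolding recurrent_future_def by blast
  qed (auto simp: recurrent_future_def)
  then show ?thesis
    unfolding omega_lim_def by simp
qed

lemma recurrent_past_nonempty: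
  assumes "finite (range g)"
  shows "recurrent_past g \<noteq> {}"
proof -
  have "finite (g ` {..0})" "infinite {..0::int}"
    using finite_subset[OF image_mono[OF subset_UNIV] assms] by (simp_all add: infinite_Iic)
  then obtain x where x: "infinite (g -` {x} \<inter> {..0})"
    by (blast elim: inf_img_fin_domE')
  have "\<exists>s\<le>t. g s = x" for t
  proof -
    obtain s where "\<bar>s\<bar> \<ge> - t" "s \<in> g -` {x} \<inter> {..0}"
      using x unfolding infinite_int_iff_unbounded_le by blast
    then show ?thesis by auto
  qed
  then show ?thesis
    unfolding recurrent_past_def by blast
qed

lemma recurrent_future_nonempty:
  assumes "finite (range g)"
  shows "recurrent_future g \<noteq> {}"
proof -
  have "finite (g ` {0..})" "infinite {0::int..}"
    using finite_subset[OF image_mono[OF subset_UNIV] assms] by (simp_all add: infinite_Ici)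
  then obtain x where x: "infinite (g -` {x} \<inter> {0..})"
    by (blast elim: inf_img_fin_domE')
  have "\<exists>s\<ge>t. g s = x" for t
  proof -
    obtain s where "\<bar>s\<bar> \<ge> t" "s \<in> g -` {x} \<inter> {0..}"
      using x unfolding infinite_int_iff_unbounded_le by blast
    then show ?thesis by auto
  qed
  then show ?thesis
    unfolding recurrent_future_def by blast
qed

lemma recurrent_past_cong:
  "(\<And>t. t \<le> c \<Longrightarrow> g t = h t) \<Longrightarrow> recurrent_past g = recurrent_past h"
  unfolding recurrent_past_def by (metis min.cobounded1 min.cobounded2 order.trans)

lemma recurrent_future_shift:
  assumes "\<And>t. t \<ge> c \<Longrightarrow> g t = h (t - n)"
  shows "recurrent_future g = recurrent_future h"
proof (intro equalityI subsetI)
  fix x assume x: "x \<in> recurrent_future g"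
  show "x \<in> recurrent_future h"
    unfolding recurrent_future_def
  proof (intro CollectI allI)
    fix t
    obtain s where "s \<ge> max (t + n) c" "g s = x"
      using x unfolding recurrent_future_def by blast
    then show "\<exists>s\<ge>t. h s = x"
      using assms[of s] by (intro exI[of _ "s - n"]) auto
  qed
next
  fix x assume x: "x \<in> recurrent_future h"
  show "x \<in> recurrent_future g"
    unfolding recurrent_future_def
  proof (intro CollectI allI)
    fix t
    obtain s where "s \<ge> max t c - n" "h s = x"
      using x unfolding recurrent_future_def by blast
    then show "\<exists>s\<ge>t. g s = x"
      using assms[of "s + n"] by (intro exI[of _ "s + n"]) auto
  qed
qed

definition splice :: "(int \<Rightarrow> 'a) \<Rightarrow> int \<Rightarrow> int \<Rightarrow> (int \<Rightarrow> 'a) \<Rightarrow> (int \<Rightarrow> 'a) \<Rightarrow> int \<Rightarrow> 'a" where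
  "splice g a b \<rho> h t = (if t \<le> 0 then g t else if t \<le> b - a then \<rho> (a + t) else h (t - (b - a)))"

lemma splice_middle:
  "g 0 = \<rho> a \<Longrightarrow> 0 \<le> t \<Longrightarrow> t \<le> b - a \<Longrightarrow> splice g a b \<rho> h t = \<rho> (a + t)"
  unfolding splice_def by auto

lemma splice_future:
  "g 0 = \<rho> a \<Longrightarrow> \<rho> b = h 0 \<Longrightarrow> a \<le> b \<Longrightarrow> b - a \<le> t \<Longrightarrow> splice g a b \<rho> h t = h (t - (b - a))"
  unfolding splice_def by auto

lemma full_solution_splice:
  assumes g: "full_solution X V g" and \<rho>: "mv_path X V a b \<rho>" and h: "full_solution X V h"
    and "g 0 = \<rho> a" "\<rho> b = h 0"
  shows "full_solution X V (splice g a b \<rho> h)"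
proof -
  let ?\<gamma> = "splice g a b \<rho> h"
  have "a \<le> b" and \<rho>_top: "\<And>t. t \<in> {a..b} \<Longrightarrow> \<rho> t \<in> topspace X"
    and \<rho>_step: "\<And>t. t \<in> {a..b} \<Longrightarrow> t + 1 \<in> {a..b} \<Longrightarrow> \<rho> (t + 1) \<in> Pi_mv X V (\<rho> t)"
    using \<rho> unfolding mv_path_def solution_def by auto
  have g_top: "g t \<in> topspace X" and g_step: "g (t + 1) \<in> Pi_mv X V (g t)"
    and h_top: "h t \<in> topspace X" and h_step: "h (t + 1) \<in> Pi_mv X V (h t)" for t
    using g h unfolding full_solution_def solution_def by auto
  have "?\<gamma> t \<in> topspace X \<and> ?\<gamma> (t + 1) \<in> Pi_mv X V (?\<gamma> t)" for t
  proof -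
    consider "t < 0" | "0 \<le> t" "t < b - a" | "b - a \<le> t"
      by linarith
    then show ?thesis
    proof cases
      case 1
      then show ?thesis
        using g_top g_step by (simp add: splice_def)
    next
      case 2
      then show ?thesis
        using splice_middle[of g \<rho> a t b h] splice_middle[of g \<rho> a "t + 1" b h] \<open>g 0 = \<rho> a\<close>
          \<rho>_top[of "a + t"] \<rho>_step[of "a + t"] by (simp add: add.assoc)
    next
      case 3
      then show ?thesis
        using splice_future[of g \<rho> a b h t] splice_future[of g \<rho> a b h "t + 1"] assms(4,5) \<open>a \<le> b\<close>
          h_top h_step[of "t - (b - a)"] by (simp add: algebra_simps)
    qed
  qed
  then show ?thesis
    unfolding full_solution_def solution_def int_interval_def by blast
qed

lemma full_solution_through_if_invariant:
  assumes "invariant X V S" "x \<in> S"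
  shows "\<exists>g. full_solution X V g \<and> range g \<subseteq> S \<and> g 0 = x"
  using assms unfolding invariant_def Inv_def essential_def by blast

lemma path_if_link:
  assumes fin: "finite (topspace X)" and mv: "multivector_field X V"
    and "is_link X V S1 S2 g"
  shows "\<exists>a b \<rho>. mv_path X V a b \<rho> \<and> \<rho> a \<in> S1 \<and> \<rho> b \<in> S2"
proof -
  have g: "full_solution X V g"
    using assms(3) unfolding is_link_def by blast
  then have "range g \<subseteq> topspace X"
    unfolding full_solution_def solution_def by blast
  then have past: "recurrent_past g \<subseteq> topspace X" and future: "recurrent_future g \<subseteq> topspace X"
    unfolding recurrent_past_def recurrent_future_def by blast+
  obtain x where x: "x \<in> S1" "x \<in> connecting_set X V (recurrent_past g)"
    using assms(3) lc_hull_subset_connecting_set[OF fin mv past]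
    unfolding is_link_def alpha_lim_eq by blast
  then obtain s where xs: "(mv_step X V)\<^sup>*\<^sup>* x (g s)"
    unfolding connecting_set_def recurrent_past_def by blast
  obtain y where y: "y \<in> S2" "y \<in> connecting_set X V (recurrent_future g)"
    using assms(3) lc_hull_subset_connecting_set[OF fin mv future]
    unfolding is_link_def omega_lim_eq by blast
  then obtain b where b: "b \<in> recurrent_future g" "(mv_step X V)\<^sup>*\<^sup>* b y"
    unfolding connecting_set_def by blast
  then obtain t where "t \<ge> s" "g t = b"
    unfolding recurrent_future_def by blast
  then have "(mv_step X V)\<^sup>*\<^sup>* x y"
    using xs full_solution_mv_step_rtranclp[OF g, of s t] b(2) by (metis rtranclp_trans)
  moreover have "x \<in> topspace X"
    using x(2) connecting_set_subset_topspace[of X V "recurrent_past g"] by blast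
  ultimately show ?thesis
    using x(1) y(1) mv_path_if_mv_step_rtranclp by metis
qed

lemma link_if_path:
  assumes fin: "finite (topspace X)"
    and "invariant X V S1" "invariant X V S2"
    and \<rho>: "mv_path X V a b \<rho>" "\<rho> a \<in> S1" "\<rho> b \<in> S2"
  shows "\<exists>g. is_link X V S1 S2 g"
proof -
  obtain g where g: "full_solution X V g" "range g \<subseteq> S1" "g 0 = \<rho> a"
    using full_solution_through_if_invariant[OF assms(2) \<rho>(2)] by blast
  obtain h where h: "full_solution X V h" "range h \<subseteq> S2" "h 0 = \<rho> b"
    using full_solution_through_if_invariant[OF assms(3) \<rho>(3)] by blast
  let ?\<gamma> = "splice g a b \<rho> h"
  have "a \<le> b"
    using \<rho>(1) unfolding mv_path_def by blast
  have "range g \<subseteq> topspace X" "range h \<subseteq> topspace X"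
    using g(1) h(1) unfolding full_solution_def solution_def by blast+
  then have "finite (range g)" "finite (range h)"
    using fin finite_subset by blast+
  have "recurrent_past ?\<gamma> = recurrent_past g"
    by (rule recurrent_past_cong[of 0]) (simp add: splice_def)
  moreover have "recurrent_future ?\<gamma> = recurrent_future h"
    by (rule recurrent_future_shift[of "b - a"])
       (simp add: splice_future \<open>a \<le> b\<close> g(3) h(3))
  moreover have "recurrent_past g \<subseteq> S1" "recurrent_future h \<subseteq> S2"
    using g(2) h(2) unfolding recurrent_past_def recurrent_future_def by blast+
  moreover have "recurrent_past ?\<gamma> \<subseteq> alpha_lim X V ?\<gamma>" "recurrent_future ?\<gamma> \<subseteq> omega_lim X V ?\<gamma>"
    unfolding alpha_lim_eq omega_lim_eq lc_hull_def by blast+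
  ultimately have "alpha_lim X V ?\<gamma> \<inter> S1 \<noteq> {}" "omega_lim X V ?\<gamma> \<inter> S2 \<noteq> {}"
    using recurrent_past_nonempty[OF \<open>finite (range g)\<close>]
      recurrent_future_nonempty[OF \<open>finite (range h)\<close>] by blast+
  moreover have "full_solution X V ?\<gamma>"
    using full_solution_splice[OF g(1) \<rho>(1) h(1)] g(3) h(3) by simp
  ultimately show ?thesis
    unfolding is_link_def by blast
qed

theorem proposition4p2:
  fixes X :: "'a topology" and V :: "'a set set" and S1 S2 :: "'a set"
  assumes "finite (topspace X)" and "t0_space X"
    and "multivector_field X V"
    and "invariant X V (topspace X)"
    and "isolated_invariant X V S1" and "isolated_invariant X V S2"
  shows "(\<exists>g. is_link X V S1 S2 g) \<longleftrightarrow>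
         (\<exists>a b \<rho>. mv_path X V a b \<rho> \<and> \<rho> a \<in> S1 \<and> \<rho> b \<in> S2)"
proof -
  have "invariant X V S1" "invariant X V S2"
    using assms(5,6) unfolding isolated_invariant_def by blast+
  then show ?thesis
    using path_if_link[OF assms(1,3)] link_if_path[OF assms(1)] by blast
qed

end
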